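(* For all $i,j\in I$, \[ \langle\!\langle \mathrm{Twirl}_i,\mathrm{Twirl}_j\rangle\!\rangle=|\mathcal E_i|\,\delta_{ij}. \] Consequently $\{|\mathcal E_i|^{-1/2}\,\mathrm{Twirl}_i\}_{i\in I}$ is an orthonormal set in $\mathcal L(\mathcal L(V))$.
   Context: Let $V$ be a finite-dimensional complex Hilbert space and $\mathcal L(V)$ the space of linear operators on $V$, equipped with the Hilbert–Schmidt inner product $\langle X_1,X_2\rangle=\mathrm{Tr}(X_1^\dagger X_2)$ (conjugate-linear in the first argument). Linear maps $\mathcal L(V)\to\mathcal L(V)$ are called superoperators; the space $\mathcal L(\mathcal L(V))$ of superoperators carries the inner product $\langle\!\langle \mathcal S,\mathcal T\rangle\!\rangle=\mathrm{Tr}(\mathcal S^\dagger\mathcal T)=\sum_{Y\in\mathcal B}\langle \mathcal S(Y),\mathcal T(Y)\rangle$, where $\mathcal B$ is any orthonormal basis of $\mathcal L(V)$ (adjoint and trace taken with respect to the Hilbert–Schmidt inner product). Fix an orthogonal decomposition $\mathcal L(V)=\bigoplus_{i\in I}\mathcal E_i$ and write $|\mathcal E_i|=\dim\mathcal E_i$. For each $i$, fix an orthonormal basis $\mathcal B_i$ of $\mathcal E_i$ and define the twirling superoperator $\mathrm{Twirl}_i(X)=\sum_{E\in\mathcal B_i}E^\dagger XE$ (it does not depend on the choice of orthonormal basis $\mathcal B_i$). *)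

theory Defs
  imports "HOL-Analysis.Analysis"
begin

text \<open>V = C^n with n = CARD('n); operators on V are n x n complex matrices.\<close>
type_synonym 'n op = "complex^'n^'n"

definition cscale :: "complex \<Rightarrow> ('n::finite) op \<Rightarrow> 'n op" where
  "cscale c A = (\<chi> i j. c * A$i$j)"

definition adj :: "('n::finite) op \<Rightarrow> 'n op" where
  "adj A = (\<chi> i j. cnj (A$j$i))"

definition tr :: "('n::finite) op \<Rightarrow> complex" where
  "tr A = (\<Sum>i\<in>UNIV. A$i$i)"

text \<open>Hilbert-Schmidt inner product, conjugate-linear in the first argument.\<close>
definition hs_inner :: "('n::finite) op \<Rightarrow> 'n op \<Rightarrow> complex" where
  "hs_inner X1 X2 = tr (adj X1 ** X2)"

definition unit_op :: "('n::finite) \<Rightarrow> 'n \<Rightarrow> 'n op" where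
  "unit_op a b = (\<chi> i j. if i = a \<and> j = b then 1 else 0)"

text \<open>Inner product of superoperators, computed in the orthonormal basis of matrix units.\<close>
definition sop_inner :: "(('n::finite) op \<Rightarrow> 'n op) \<Rightarrow> ('n op \<Rightarrow> 'n op) \<Rightarrow> complex" where
  "sop_inner S T = (\<Sum>(a,b)\<in>UNIV. hs_inner (S (unit_op a b)) (T (unit_op a b)))"

definition hs_orthonormal :: "('n::finite) op set \<Rightarrow> bool" where
  "hs_orthonormal B \<longleftrightarrow> (\<forall>E\<in>B. \<forall>F\<in>B. hs_inner E F = (if E = F then 1 else 0))"

definition twirl :: "('n::finite) op set \<Rightarrow> 'n op \<Rightarrow> 'n op" where
  "twirl B X = (\<Sum>E\<in>B. adj E ** X ** E)"

abbreviation csubspace :: "('n::finite) op set \<Rightarrow> bool" where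
  "csubspace S \<equiv> module.subspace cscale S"

abbreviation cspan :: "('n::finite) op set \<Rightarrow> 'n op set" where
  "cspan S \<equiv> module.span cscale S"

abbreviation cdim :: "('n::finite) op set \<Rightarrow> nat" where
  "cdim S \<equiv> vector_space.dim cscale S"

end

theory Submission
  imports Defs
begin

text \<open>
  Since the matrix unit e_ab sandwiched as A e_ab B has entries A_ka B_bi, the superoperator
  inner product of X \<mapsto> A X B and X \<mapsto> C X D factorises as \<langle>A, C\<rangle> \<langle>B, D\<rangle>.
  Expanding both twirls by sesquilinearity therefore gives
  \<langle>\<langle>Twirl_i, Twirl_j\<rangle>\<rangle> = \<Sum> E \<in> B_i, F \<in> B_j. |\<langle>E, F\<rangle>|^2,
  which is |B_i| = dim E_i for i = j by orthonormality of B_i and 0 for i \<noteq> j because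
  E_i \<perp> E_j.
\<close>

lemma hs_inner_eq_sum: "hs_inner X Y = (\<Sum>i\<in>UNIV. \<Sum>k\<in>UNIV. cnj (X$k$i) * Y$k$i)"
  by (simp add: hs_inner_def tr_def adj_def matrix_matrix_mult_def)

lemma hs_inner_adj: "hs_inner (adj X) (adj Y) = cnj (hs_inner X Y)"
  unfolding hs_inner_eq_sum cnj_sum by (simp add: adj_def mult.commute) (rule sum.swap)

lemma hs_inner_sum_left: "hs_inner (sum f A) Y = (\<Sum>x\<in>A. hs_inner (f x) Y)"
  by (induction A rule: infinite_finite_induct)
     (simp_all add: hs_inner_eq_sum distrib_right sum.distrib)

lemma hs_inner_sum_right: "hs_inner X (sum f A) = (\<Sum>x\<in>A. hs_inner X (f x))"
  by (induction A rule: infinite_finite_induct)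
     (simp_all add: hs_inner_eq_sum distrib_left sum.distrib)

lemma hs_inner_cscale: "hs_inner (cscale a X) (cscale b Y) = cnj a * b * hs_inner X Y"
  by (simp add: hs_inner_eq_sum cscale_def sum_distrib_left mult_ac)

lemma hs_inner_cscale_right: "hs_inner X (cscale b Y) = b * hs_inner X Y"
  by (simp add: hs_inner_eq_sum cscale_def sum_distrib_left mult_ac)

lemma inner_eq_Re_hs_inner: "(X::('n::finite) op) \<bullet> Y = Re (hs_inner X Y)"
  by (simp add: hs_inner_eq_sum inner_vec_def inner_complex_def Re_sum) (rule sum.swap)

lemma mult_unit_op_entry: "(A ** unit_op a b)$k$j = (if j = b then A$k$a else 0)"
  by (simp add: unit_op_def matrix_matrix_mult_def if_distrib[of "\<lambda>x. _ * x"] cong: if_cong)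

lemma sandwich_unit_op_entry: "(A ** unit_op a b ** B)$k$i = A$k$a * B$b$i"
  by (simp add: matrix_matrix_mult_def[of "A ** unit_op a b"] mult_unit_op_entry
      if_distrib[of "\<lambda>x. x * _"] cong: if_cong)

lemma sop_inner_sandwich:
  "sop_inner (\<lambda>X. A ** X ** B) (\<lambda>X. C ** X ** D) = hs_inner A C * hs_inner B D"
proof -
  have "hs_inner (A ** unit_op a b ** B) (C ** unit_op a b ** D)
      = (\<Sum>k\<in>UNIV. cnj (A$k$a) * C$k$a) * (\<Sum>i\<in>UNIV. cnj (B$b$i) * D$b$i)" for a b
  proof -
    have "hs_inner (A ** unit_op a b ** B) (C ** unit_op a b ** D)
        = (\<Sum>i\<in>UNIV. \<Sum>k\<in>UNIV. (cnj (A$k$a) * C$k$a) * (cnj (B$b$i) * D$b$i))"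
      unfolding hs_inner_eq_sum sandwich_unit_op_entry by (simp add: mult_ac)
    also have "\<dots> = (\<Sum>k\<in>UNIV. \<Sum>i\<in>UNIV. (cnj (A$k$a) * C$k$a) * (cnj (B$b$i) * D$b$i))"
      by (rule sum.swap)
    finally show ?thesis by (simp only: sum_product)
  qed
  then have "sop_inner (\<lambda>X. A ** X ** B) (\<lambda>X. C ** X ** D)
      = (\<Sum>(a, b)\<in>UNIV \<times> UNIV. (\<Sum>k\<in>UNIV. cnj (A$k$a) * C$k$a) * (\<Sum>i\<in>UNIV. cnj (B$b$i) * D$b$i))"
    by (simp add: sop_inner_def)
  also have "\<dots> = (\<Sum>a\<in>UNIV. \<Sum>k\<in>UNIV. cnj (A$k$a) * C$k$a) * (\<Sum>b\<in>UNIV. \<Sum>i\<in>UNIV. cnj (B$b$i) * D$b$i)"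
    by (simp only: sum.cartesian_product[symmetric] sum_product)
  also have "\<dots> = hs_inner A C * hs_inner B D"
    unfolding hs_inner_eq_sum by (subst (2) sum.swap) (rule refl)
  finally show ?thesis .
qed

lemma sop_inner_sum_left:
  "sop_inner (\<lambda>X. \<Sum>x\<in>A. S x X) T = (\<Sum>x\<in>A. sop_inner (S x) T)"
  unfolding sop_inner_def hs_inner_sum_left case_prod_beta by (rule sum.swap)

lemma sop_inner_sum_right:
  "sop_inner S (\<lambda>X. \<Sum>x\<in>A. T x X) = (\<Sum>x\<in>A. sop_inner S (T x))"
  unfolding sop_inner_def hs_inner_sum_right case_prod_beta by (rule sum.swap)

lemma sop_inner_cscale:
  "sop_inner (\<lambda>X. cscale a (S X)) (\<lambda>X. cscale b (T X)) = cnj a * b * sop_inner S T"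
  by (simp add: sop_inner_def hs_inner_cscale sum_distrib_left case_prod_beta)

lemma sop_inner_twirl:
  "sop_inner (twirl A) (twirl C) = (\<Sum>E\<in>A. \<Sum>F\<in>C. cnj (hs_inner E F) * hs_inner E F)"
proof -
  have twirl_eq: "twirl B = (\<lambda>X. \<Sum>E\<in>B. adj E ** X ** E)" for B :: "('n::finite) op set"
    by (simp add: fun_eq_iff twirl_def)
  show ?thesis
    by (simp only: twirl_eq sop_inner_sum_left sop_inner_sum_right sop_inner_sandwich hs_inner_adj)
qed

lemma sop_inner_twirl_orthogonal:
  assumes "\<And>X Y. X \<in> A \<Longrightarrow> Y \<in> C \<Longrightarrow> hs_inner X Y = 0"
  shows "sop_inner (twirl A) (twirl C) = 0"
  by (simp add: sop_inner_twirl assms)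

lemma sop_inner_twirl_self:
  assumes "hs_orthonormal B"
  shows "sop_inner (twirl B) (twirl B) = of_nat (card B)"
proof (cases "finite B")
  case True
  have "sop_inner (twirl B) (twirl B) = (\<Sum>E\<in>B. \<Sum>F\<in>B. if E = F then 1 else 0)"
    unfolding sop_inner_twirl using assms by (intro sum.cong refl) (simp add: hs_orthonormal_def)
  then show ?thesis using True by simp
qed (simp add: sop_inner_twirl)

lemma module_cscale: "module (cscale :: complex \<Rightarrow> ('n::finite) op \<Rightarrow> _)"
  by unfold_locales (auto simp: cscale_def vec_eq_iff algebra_simps)

lemma hs_orthonormal_finite:
  assumes "hs_orthonormal (B::('n::finite) op set)"
  shows "finite B"
proof -
  have "pairwise orthogonal B"
    using assms by (auto simp: pairwise_def orthogonal_def inner_eq_Re_hs_inner hs_orthonormal_def)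
  moreover have "0 \<notin> B"
  proof
    assume "0 \<in> B"
    then have "hs_inner 0 (0::'n op) = 1"
      using assms by (auto simp: hs_orthonormal_def)
    then show False by (simp add: hs_inner_eq_sum)
  qed
  ultimately show ?thesis
    using pairwise_orthogonal_independent independent_bound by blast
qed

lemma hs_orthonormal_independent:
  assumes "hs_orthonormal (B::('n::finite) op set)"
  shows "\<not> module.dependent cscale B"
proof
  assume "module.dependent cscale B"
  then obtain t u v where t: "finite t" "t \<subseteq> B" "(\<Sum>w\<in>t. cscale (u w) w) = 0"
    and v: "v \<in> t" "u v \<noteq> 0"
    unfolding module.dependent_explicit[OF module_cscale] by blast
  have "0 = hs_inner v (\<Sum>w\<in>t. cscale (u w) w)"
    using t(3) by (simp add: hs_inner_eq_sum)
  also have "\<dots> = (\<Sum>w\<in>t. u w * (if v = w then 1 else 0))"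
    using t v assms unfolding hs_inner_sum_right hs_inner_cscale_right hs_orthonormal_def
    by (intro sum.cong refl) (auto dest!: subsetD[OF t(2)])
  also have "\<dots> = u v"
    using t v by (simp add: if_distrib cong: if_cong)
  finally show False using v by simp
qed

lemma cdim_cspan_hs_orthonormal:
  assumes "hs_orthonormal (B::('n::finite) op set)"
  shows "cdim (cspan B) = card B"
  using vector_space.dim_span_eq_card_independent[OF module_cscale[unfolded module_iff_vector_space]
      hs_orthonormal_independent[OF assms]] .

theorem mainTheorem1:
  fixes E B :: "'i \<Rightarrow> ('n::finite) op set"
  assumes subsp: "\<And>i. csubspace (E i)"
    and orth: "\<And>i j X Y. i \<noteq> j \<Longrightarrow> X \<in> E i \<Longrightarrow> Y \<in> E j \<Longrightarrow> hs_inner X Y = 0"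
    and total: "cspan (\<Union>i. E i) = UNIV"
    and basis_sub: "\<And>i. B i \<subseteq> E i"
    and basis_on: "\<And>i. hs_orthonormal (B i)"
    and basis_span: "\<And>i. cspan (B i) = E i"
  shows "(\<forall>i j. sop_inner (twirl (B i)) (twirl (B j))
                 = (if i = j then of_nat (cdim (E i)) else 0))
       \<and> (\<forall>i j. E i \<noteq> {0} \<longrightarrow> E j \<noteq> {0} \<longrightarrow>
            sop_inner (\<lambda>X. cscale (of_real (1 / sqrt (real (cdim (E i))))) (twirl (B i) X))
                      (\<lambda>X. cscale (of_real (1 / sqrt (real (cdim (E j))))) (twirl (B j) X))
            = (if i = j then 1 else 0))"
proof -
  have dim: "cdim (E i) = card (B i)" for i
    using cdim_cspan_hs_orthonormal[OF basis_on[of i]] by (simp add: basis_span)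
  have inner: "sop_inner (twirl (B i)) (twirl (B j)) = (if i = j then of_nat (cdim (E i)) else 0)"
    for i j
  proof (cases "i = j")
    case False
    have "sop_inner (twirl (B i)) (twirl (B j)) = 0"
      using False orth basis_sub by (intro sop_inner_twirl_orthogonal) blast
    then show ?thesis
      using False by simp
  qed (simp add: dim sop_inner_twirl_self[OF basis_on])
  have trivial_if_dim_0: "E i = {0}" if "cdim (E i) = 0" for i
  proof -
    have "B i = {}"
      using that dim hs_orthonormal_finite[OF basis_on] by simp
    then show ?thesis
      using basis_span[of i] module.span_empty[OF module_cscale] by metis
  qed
  have sqrt_square: "complex_of_real (sqrt (real d)) * complex_of_real (sqrt (real d)) = of_nat d"
    for d :: nat
    by (simp flip: of_real_mult)
  show ?thesis
    using trivial_if_dim_0 by (simp add: inner sop_inner_cscale sqrt_square)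
qed

end
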